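(* Let $G=C_2^r$ with $r\ge 3$. Then $\{2,r-1,r\}\in\mathcal L(G)$ if and only if $r\in[3,5]$.
   Context: $C_2^r$ denotes an elementary abelian $2$-group of rank $r$; $[a,b]=\{x\in\mathbb Z:a\le x\le b\}$. For a finite abelian group $G$, a sequence over $G$ is an element of the free abelian monoid $\mathcal F(G)$ with basis $G$ (a finite unordered list of elements of $G$, repetitions allowed). $\mathcal B(G)$ is the monoid of zero-sum sequences over $G$ (including the empty sequence). An atom is a minimal zero-sum sequence, i.e. a nonempty zero-sum sequence that is not a product of two nonempty zero-sum sequences. For $B\in\mathcal B(G)$, $\mathsf L(B)=\{k\in\mathbb N_0: B \text{ is a product of } k \text{ atoms}\}$, and $\mathcal L(G)=\{\mathsf L(B):B\in\mathcal B(G)\}$. *)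

theory Defs
  imports Main "HOL-Library.Multiset"
begin

text \<open>Model of the elementary abelian 2-group C_2^r: elements are subsets of {..<r}
  (characteristic vectors in F_2^r), addition is symmetric difference, zero is the empty set.\<close>

definition elem2 :: "nat \<Rightarrow> nat set \<Rightarrow> bool" where
  "elem2 r g \<longleftrightarrow> g \<subseteq> {..<r}"

definition seq_over :: "nat \<Rightarrow> nat set multiset \<Rightarrow> bool" where
  "seq_over r S \<longleftrightarrow> (\<forall>g\<in>#S. elem2 r g)"

definition seq_sum :: "nat set multiset \<Rightarrow> nat set" where
  "seq_sum S = {i. odd (size (filter_mset (\<lambda>g. i \<in> g) S))}"

definition zero_sum_seq :: "nat \<Rightarrow> nat set multiset \<Rightarrow> bool" where
  "zero_sum_seq r S \<longleftrightarrow> seq_over r S \<and> seq_sum S = {}"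

definition atom2 :: "nat \<Rightarrow> nat set multiset \<Rightarrow> bool" where
  "atom2 r A \<longleftrightarrow> zero_sum_seq r A \<and> A \<noteq> {#} \<and>
     (\<forall>U V. A = U + V \<and> zero_sum_seq r U \<and> zero_sum_seq r V \<longrightarrow> U = {#} \<or> V = {#})"

definition Lset :: "nat \<Rightarrow> nat set multiset \<Rightarrow> nat set" where
  "Lset r B = {k. \<exists>F :: nat set multiset multiset.
      size F = k \<and> (\<forall>A\<in>#F. atom2 r A) \<and> sum_mset F = B}"

definition system_of_sets :: "nat \<Rightarrow> nat set set" where
  "system_of_sets r = {Lset r B | B. zero_sum_seq r B}"

end

theory Submission
  imports Defs
begin

text \<open>
  For r \<ge> 6 suppose L(B) = {2, r - 1, r} and write B = U V with atoms U, V. The Davenport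
  bound gives |U|, |V| \<le> r + 1, while a factorization of length r forces |B| \<ge> 2r, so U and V
  are long and squarefree. In a factorization of length at least r - 1, an atom X of size at
  least 3 through a common element of U and V can be traded for a factorization of length
  between 3 and |X| (squares of the common elements of X, together with factorizations of the
  symmetric differences of X with U and with V); since all lengths lie in {2} \<union> [r - 1, r],
  X has length at least r - 1, and so has the second atom through that common element, which
  makes B too long. Hence the squares
  of a long factorization are exactly the squares of the common elements, and comparing
  factorizations of lengths r and r - 1 produces an atom with a factorization of length 2.

  For r = 3, 4, 5 explicit products of two atoms have the sets of lengths {2, 3}, {2, 3, 4}
  and {2, 4, 5}; atoms are certified by a triangularity criterion, and length 3 is excluded
  for r = 5 by a parity argument on the coordinates 0, ..., 3.
\<close>

section \<open>Sums over F_2^r\<close>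

abbreviation coord_count :: "nat \<Rightarrow> nat set multiset \<Rightarrow> nat" where
  "coord_count i M \<equiv> size (filter_mset (\<lambda>g. i \<in> g) M)"

lemma mem_seq_sum_iff: "i \<in> seq_sum M \<longleftrightarrow> odd (coord_count i M)"
  by (simp add: seq_sum_def)

lemma seq_sum_empty [simp]: "seq_sum {#} = {}"
  by (simp add: seq_sum_def)

lemma mem_seq_sum_add_mset: "i \<in> seq_sum (add_mset g M) \<longleftrightarrow> (i \<in> g) \<noteq> (i \<in> seq_sum M)"
  by (simp add: seq_sum_def)

lemma mem_seq_sum_union: "i \<in> seq_sum (M + N) \<longleftrightarrow> (i \<in> seq_sum M) \<noteq> (i \<in> seq_sum N)"
  by (simp add: seq_sum_def)

lemma seq_sum_eq_empty_iff: "seq_sum M = {} \<longleftrightarrow> (\<forall>i. even (coord_count i M))"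
  by (auto simp add: seq_sum_def)

lemma seq_sum_single [simp]: "seq_sum {#g#} = g"
  by (auto simp add: seq_sum_def)

lemma seq_sum_double [simp]: "seq_sum {#g, g#} = {}"
  by (auto simp add: seq_sum_def)

lemma seq_sum_union_empty: "seq_sum M = {} \<Longrightarrow> seq_sum N = {} \<Longrightarrow> seq_sum (M + N) = {}"
  using mem_seq_sum_union by blast

lemma seq_sum_diff_eq:
  assumes "seq_sum M = {}" "N \<subseteq># M" shows "seq_sum (M - N) = seq_sum N"
proof -
  have "i \<in> seq_sum (N + (M - N)) \<longleftrightarrow> i \<in> seq_sum M" for i
    using assms(2) by simp
  then show ?thesis using assms(1) by (auto simp: mem_seq_sum_union)
qed

lemma seq_sum_symmetric_diff_empty:
  assumes "seq_sum M = {}" "seq_sum N = {}" shows "seq_sum ((M - N) + (N - M)) = {}"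
proof -
  have "seq_sum (M - N) = seq_sum (M \<inter># N)"
    using seq_sum_diff_eq[OF assms(1), of "M \<inter># N"] by simp
  moreover have "seq_sum (N - M) = seq_sum (M \<inter># N)"
    using seq_sum_diff_eq[OF assms(2), of "N \<inter># M"] by (simp add: subset_mset.inf_commute)
  ultimately show ?thesis using mem_seq_sum_union by blast
qed

lemma seq_sum_sum_mset_empty: "\<forall>A\<in>#F. seq_sum A = {} \<Longrightarrow> seq_sum (sum_mset F) = {}"
  by (induction F) (simp_all add: seq_sum_union_empty)

lemma sum_card_inter_eq_sum_coord_count:
  assumes "finite I" shows "(\<Sum>h\<in>#M. card (h \<inter> I)) = (\<Sum>i\<in>I. coord_count i M)"
proof (induction M)
  case (add h M)
  have "(\<Sum>i\<in>I. coord_count i (add_mset h M)) = (\<Sum>i\<in>I. coord_count i M + (if i \<in> h then 1 else 0))"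
    by (rule sum.cong) auto
  also have "\<dots> = (\<Sum>i\<in>I. coord_count i M) + card (h \<inter> I)"
    using assms by (simp add: sum.distrib sum.If_cases Int_commute)
  finally show ?case using add by simp
qed simp

lemma zero_sum_even_card_inter:
  assumes "seq_sum M = {}" "finite I" shows "even (\<Sum>h\<in>#M. card (h \<inter> I))"
  unfolding sum_card_inter_eq_sum_coord_count[OF assms(2)]
  using assms(1) by (intro dvd_sum) (simp add: seq_sum_eq_empty_iff)

lemma seq_over_empty [simp]: "seq_over r {#}"
  by (simp add: seq_over_def)

lemma seq_over_add_mset [simp]: "seq_over r (add_mset g M) \<longleftrightarrow> elem2 r g \<and> seq_over r M"
  by (simp add: seq_over_def)

lemma seq_over_union [simp]: "seq_over r (M + N) \<longleftrightarrow> seq_over r M \<and> seq_over r N"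
  by (auto simp add: seq_over_def)

lemma seq_over_mono: "seq_over r M \<Longrightarrow> N \<subseteq># M \<Longrightarrow> seq_over r N"
  unfolding seq_over_def by (meson mset_subset_eqD)

lemma seq_over_sum_mset: "\<forall>A\<in>#F. seq_over r A \<Longrightarrow> seq_over r (sum_mset F)"
  by (induction F) auto

lemma zero_sum_seq_union: "zero_sum_seq r M \<Longrightarrow> zero_sum_seq r N \<Longrightarrow> zero_sum_seq r (M + N)"
  by (simp add: zero_sum_seq_def seq_sum_union_empty)

lemma zero_sum_seq_subseq:
  "zero_sum_seq r M \<Longrightarrow> N \<subseteq># M \<Longrightarrow> seq_sum N = {} \<Longrightarrow> zero_sum_seq r N"
  unfolding zero_sum_seq_def using seq_over_mono by blast

lemma zero_sum_seq_diff: "zero_sum_seq r M \<Longrightarrow> N \<subseteq># M \<Longrightarrow> seq_sum N = {} \<Longrightarrow> zero_sum_seq r (M - N)"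
  unfolding zero_sum_seq_def using seq_over_mono seq_sum_diff_eq by (metis diff_subset_eq_self)

section \<open>Multisets\<close>

lemma size_eq_2_mset: "size M = 2 \<Longrightarrow> \<exists>a b. M = {#a, b#}"
  by (metis One_nat_def Suc_1 add_mset_add_single size_1_singleton_mset size_add_mset
      size_eq_Suc_imp_eq_union Suc_inject)

lemma count_eq_if_le_1:
  assumes "count A g \<le> 1" shows "count A g = (if g \<in># A then 1 else 0)"
proof (cases "g \<in># A")
  case True
  then have "0 < count A g" by simp
  then have "count A g = 1" using assms by linarith
  then show ?thesis using True by simp
qed (simp add: not_in_iff)

lemma subset_mset_add_mset_notin:
  assumes "T \<subseteq># add_mset y N" "y \<notin># T" shows "T \<subseteq># N"
  unfolding subseteq_mset_def
proof
  fix a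
  show "count T a \<le> count N a"
    using assms mset_subset_eq_count[OF assms(1), of a] by (cases "a = y") (auto simp: not_in_iff)
qed

lemma subset_mset_add_mset_right: "T \<subseteq># M \<Longrightarrow> T \<subseteq># add_mset x M"
  by (simp add: subset_mset.order_trans[of T M])

lemma subseteq_image_mset_imp_ex:
  "T' \<subseteq># image_mset f M \<Longrightarrow> \<exists>T. T \<subseteq># M \<and> image_mset f T = T'"
proof (induction M arbitrary: T')
  case (add x M)
  show ?case
  proof (cases "f x \<in># T'")
    case True
    then have "T' - {#f x#} \<subseteq># image_mset f M" using add.prems
      by (simp add: subset_eq_diff_conv)
    then obtain T where "T \<subseteq># M" "image_mset f T = T' - {#f x#}" using add.IH by blast
    then show ?thesis using True
      by (intro exI[of _ "add_mset x T"]) (auto simp: insert_DiffM)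
  next
    case False
    then have "T' \<subseteq># image_mset f M" using add.prems subset_mset_add_mset_notin by simp
    then show ?thesis using add.IH subset_mset_add_mset_right by meson
  qed
qed simp

lemma mset_subset_eq_sum_mset: "A \<in># F \<Longrightarrow> A \<subseteq># sum_mset F"
  by (metis mset_subset_eq_add_left sum_mset.remove)

lemma mem_sum_mset_iff: "x \<in># sum_mset F \<longleftrightarrow> (\<exists>A\<in>#F. x \<in># A)"
  by (induction F) auto

lemma size_sum_mset_ge:
  assumes "\<forall>A\<in>#F. k \<le> size A" shows "k * size F \<le> size (sum_mset (F :: 'a multiset multiset))"
  using sum_mset_mono[of F "\<lambda>_. k" size] assms by (simp add: mult.commute)

lemma size_sum_mset_le:
  assumes "\<forall>A\<in>#F. size A \<le> k" shows "size (sum_mset (F :: 'a multiset multiset)) \<le> k * size F"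
  using sum_mset_mono[of F size "\<lambda>_. k"] assms by (simp add: mult.commute)

lemma size_sum_mset_eq:
  assumes "\<forall>A\<in>#F. size A = k" shows "size (sum_mset (F :: 'a multiset multiset)) = k * size F"
  by (intro antisym size_sum_mset_le size_sum_mset_ge) (use assms in auto)

lemma size_sum_mset_tight:
  "\<forall>A\<in>#F. k \<le> size A \<Longrightarrow> size (sum_mset (F :: 'a multiset multiset)) \<le> k * size F \<Longrightarrow>
    \<forall>A\<in>#F. size A = k"
proof (induction F)
  case (add A F)
  have ge: "\<forall>B\<in>#F. k \<le> size B" "k \<le> size A" using add.prems(1) by simp_all
  have "k * size F \<le> size (sum_mset F)" using ge(1) by (rule size_sum_mset_ge)
  moreover have "size (sum_mset (add_mset A F)) = size A + size (sum_mset F)" by simp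
  moreover have "k * size (add_mset A F) = k + k * size F" by simp
  ultimately have "size A = k" and F_le: "size (sum_mset F) \<le> k * size F"
    using add.prems(2) ge(2) by linarith+
  moreover have "\<forall>B\<in>#F. size B = k" using add.IH[OF ge(1) F_le] .
  ultimately show ?case by simp
qed simp

lemma size_le_size_filter_sum_mset:
  "\<forall>Z\<in>#G. \<exists>g\<in>#Z. P g \<Longrightarrow> size G \<le> size (filter_mset P (sum_mset G))"
proof (induction G)
  case (add Z G)
  then obtain g where "g \<in># filter_mset P Z" by auto
  then have "0 < size (filter_mset P Z)" using nonempty_has_size by force
  then show ?case using add by simp
qed simp

lemma filter_mset_sum_mset_blocks:
  assumes "\<And>A. A \<in># F \<Longrightarrow> filter_mset P A = (if Q A then A else {#})"
  shows "filter_mset P (sum_mset F) = sum_mset (filter_mset Q F)"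
  using assms
proof (induction F)
  case (add A F)
  then have "filter_mset P (sum_mset F) = sum_mset (filter_mset Q F)" by simp
  then show ?case using add.prems[of A] by simp
qed simp

lemma sum_mset_filter_subseteq: "sum_mset (filter_mset P F) \<subseteq># sum_mset F"
proof -
  have "sum_mset F = sum_mset (filter_mset P F + filter_mset (\<lambda>x. \<not> P x) F)"
    by (simp only: multiset_partition[symmetric])
  then show ?thesis by (simp only: sum_mset.union) (rule mset_subset_eq_add_left)
qed

lemma sum_mset_image_double: "sum_mset (image_mset (\<lambda>g. {#g, g#}) Q) = Q + Q"
  by (induction Q) auto

lemma sum_mset_filter_partition:
  "(\<Sum>x\<in>#M. f x) = (\<Sum>x\<in>#filter_mset P M. f x) + (\<Sum>x\<in>#filter_mset (\<lambda>x. \<not> P x) M. f x)"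
  by (induction M) (auto simp: ac_simps)

lemma even_sum_mset: "\<forall>x\<in>#M. even (f x :: nat) \<Longrightarrow> even (\<Sum>x\<in>#M. f x)"
  by (induction M) auto

section \<open>Atoms and factorizations\<close>

lemma atom2_zero_sum_seq: "atom2 r A \<Longrightarrow> zero_sum_seq r A"
  by (simp add: atom2_def)

lemma atom2_seq_sum: "atom2 r A \<Longrightarrow> seq_sum A = {}"
  by (simp add: atom2_def zero_sum_seq_def)

lemma atom2_nonempty: "atom2 r A \<Longrightarrow> A \<noteq> {#}"
  by (simp add: atom2_def)

lemma atom2_zero_sum_subseq:
  assumes "atom2 r A" "X \<subseteq># A" "seq_sum X = {}"
  shows "X = {#} \<or> X = A"
proof -
  have "zero_sum_seq r X" "zero_sum_seq r (A - X)"
    using assms zero_sum_seq_subseq zero_sum_seq_diff atom2_zero_sum_seq by blast+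
  moreover have A: "A = X + (A - X)" using assms(2) by simp
  ultimately have "X = {#} \<or> A - X = {#}" using assms(1) unfolding atom2_def by blast
  then show ?thesis using A by auto
qed

lemma atom2_contains_empty: "atom2 r A \<Longrightarrow> {} \<in># A \<Longrightarrow> A = {#{}#}"
  using atom2_zero_sum_subseq[of r A "{#{}#}"] by auto

lemma atom2_count_ge_2:
  assumes "atom2 r A" "2 \<le> count A g" shows "A = {#g, g#}"
proof -
  have "{#g, g#} \<subseteq># A" using assms(2) by (auto simp: subseteq_mset_def)
  then show ?thesis using atom2_zero_sum_subseq[OF assms(1)] by fastforce
qed

lemma atom2_count_le_1: "atom2 r A \<Longrightarrow> 3 \<le> size A \<Longrightarrow> count A g \<le> 1"
proof (rule ccontr)
  assume "atom2 r A" "3 \<le> size A" "\<not> count A g \<le> 1"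
  then show False using atom2_count_ge_2[of r A g] by simp
qed

lemma atom2_size_1:
  assumes "atom2 r A" "size A = 1" shows "A = {#{}#}"
proof -
  obtain g where "A = {#g#}" using assms(2) size_1_singleton_mset by blast
  then show ?thesis using assms(1) by (simp add: atom2_def zero_sum_seq_def)
qed

lemma atom2_size_2:
  assumes "atom2 r A" "size A = 2" obtains g where "A = {#g, g#}" "g \<noteq> {}"
proof -
  obtain g h where gh: "A = {#g, h#}"
    using size_eq_2_mset[OF assms(2)] by blast
  have "g = h" using atom2_seq_sum[OF assms(1)] gh by (auto simp: set_eq_iff mem_seq_sum_add_mset)
  moreover have "g \<noteq> {}"
  proof
    assume "g = {}"
    then have "A = {#{}#}" using atom2_contains_empty[OF assms(1)] gh by simp
    then show False using assms(2) by simp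
  qed
  ultimately show thesis using gh that by blast
qed

lemma atom2_double:
  assumes "g \<noteq> {}" "elem2 r g" shows "atom2 r {#g, g#}"
  unfolding atom2_def
proof (intro conjI allI impI)
  show "zero_sum_seq r {#g, g#}" using assms(2) by (simp add: zero_sum_seq_def)
  fix U V assume UV: "{#g, g#} = U + V \<and> zero_sum_seq r U \<and> zero_sum_seq r V"
  show "U = {#} \<or> V = {#}"
  proof (rule ccontr)
    assume "\<not> (U = {#} \<or> V = {#})"
    then have "size U \<ge> 1" "size V \<ge> 1" by (auto simp: Suc_le_eq nonempty_has_size)
    moreover have "size U + size V = 2" using UV by (metis size_union size_add_mset size_single Suc_1)
    ultimately have "size U = 1" by arith
    then obtain x where "U = {#x#}" using size_1_singleton_mset by blast
    moreover have "x = g" using UV \<open>U = {#x#}\<close> by (metis union_iff add_mset_add_single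
          multi_member_this set_mset_add_mset_insert insert_absorb2 singletonD set_mset_single)
    ultimately show False using UV assms(1) by (simp add: zero_sum_seq_def)
  qed
qed simp

lemma atom2_size_count_empty:
  assumes "atom2 r A" shows "2 \<le> size A + count A {}"
proof (cases "{} \<in># A")
  case True then show ?thesis using atom2_contains_empty[OF assms] by simp
next
  case False
  then have "size A \<noteq> 1" using atom2_size_1[OF assms] by auto
  moreover have "size A \<noteq> 0" using atom2_nonempty[OF assms] by simp
  ultimately show ?thesis by arith
qed

lemma atom2_size_ge_2: "atom2 r A \<Longrightarrow> {} \<notin># A \<Longrightarrow> 2 \<le> size A"
  using atom2_size_count_empty[of r A] by (simp add: not_in_iff)

lemma atom2_count_empty_le_1: "atom2 r A \<Longrightarrow> count A {} \<le> 1"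
  using atom2_contains_empty[of r A] by (cases "{} \<in># A") (auto simp: not_in_iff)

text \<open>Adding g0 to every term with coordinate r; for r \<in> g0 this clears coordinate r, which
  drives the induction on r in the Davenport bound.\<close>
definition toggle_coord :: "nat \<Rightarrow> nat set \<Rightarrow> nat set \<Rightarrow> nat set" where
  "toggle_coord r g0 g = (if r \<in> g then (g - g0) \<union> (g0 - g) else g)"

lemma coord_count_toggle_coord_odd_iff:
  "odd (coord_count i (image_mset (toggle_coord r g0) T)) \<longleftrightarrow>
   odd (coord_count i T) \<noteq> (i \<in> g0 \<and> odd (coord_count r T))"
  by (induction T) (auto simp: toggle_coord_def)

lemma seq_sum_toggle_coord_empty:
  assumes "seq_sum (image_mset (toggle_coord r g0) T) = {}"
  shows "seq_sum (if odd (coord_count r T) then add_mset g0 T else T) = {}"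
proof -
  define p where "p = coord_count r T"
  have "\<forall>i. odd (coord_count i T) = (i \<in> g0 \<and> odd p)"
    using assms coord_count_toggle_coord_odd_iff[of i r g0 T for i]
    unfolding seq_sum_eq_empty_iff p_def by blast
  then show ?thesis unfolding p_def[symmetric] by (auto simp: seq_sum_eq_empty_iff)
qed

lemma seq_over_toggle_coord:
  "seq_over (Suc r) S \<Longrightarrow> elem2 (Suc r) g0 \<Longrightarrow> r \<in> g0 \<Longrightarrow> seq_over r (image_mset (toggle_coord r g0) S)"
  unfolding seq_over_def elem2_def toggle_coord_def by (auto simp: less_Suc_eq subset_iff)

lemma seq_over_if_coord_unused:
  assumes "seq_over (Suc r) S" "\<forall>g\<in>#S. r \<notin> g" shows "seq_over r S"
  unfolding seq_over_def elem2_def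
proof (intro ballI subsetI)
  fix g x assume "g \<in># S" "x \<in> g"
  then have "x < Suc r" "x \<noteq> r" using assms by (auto simp: seq_over_def elem2_def)
  then show "x \<in> {..<r}" by simp
qed

lemma long_seq_has_zero_sum_subseq:
  "seq_over r S \<Longrightarrow> r < size S \<Longrightarrow> \<exists>T. T \<subseteq># S \<and> T \<noteq> {#} \<and> seq_sum T = {}"
proof (induction r arbitrary: S)
  case 0
  then obtain g where g: "g \<in># S" by (metis gr_implies_not0 multiset_nonemptyE size_empty)
  then have "g = {}" using 0 by (auto simp: seq_over_def elem2_def)
  then show ?case using g by (intro exI[of _ "{#g#}"]) auto
next
  case (Suc r)
  show ?case
  proof (cases "\<exists>g\<in>#S. r \<in> g")
    case False
    then show ?thesis using Suc seq_over_if_coord_unused by simp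
  next
    case True
    then obtain g0 where g0: "g0 \<in># S" "r \<in> g0" by blast
    define S0 where "S0 = S - {#g0#}"
    have S: "S = add_mset g0 S0" using g0 S0_def by simp
    have "seq_over r (image_mset (toggle_coord r g0) S0)"
      using Suc.prems(1) g0(2) seq_over_toggle_coord unfolding S by simp
    moreover have "r < size (image_mset (toggle_coord r g0) S0)" using Suc.prems(2) S by simp
    ultimately obtain T' where T': "T' \<subseteq># image_mset (toggle_coord r g0) S0" "T' \<noteq> {#}" "seq_sum T' = {}"
      using Suc.IH by blast
    obtain T0 where T0: "T0 \<subseteq># S0" "image_mset (toggle_coord r g0) T0 = T'"
      using subseteq_image_mset_imp_ex[OF T'(1)] by blast
    define T where "T = (if odd (coord_count r T0) then add_mset g0 T0 else T0)"
    have "T \<subseteq># S" using T0(1) S subset_mset_add_mset_right unfolding T_def by auto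
    moreover have "T \<noteq> {#}" using T0 T'(2) unfolding T_def by auto
    moreover have "seq_sum T = {}" using seq_sum_toggle_coord_empty T'(3) T0(2) unfolding T_def by blast
    ultimately show ?thesis by blast
  qed
qed

lemma atom2_size_le:
  assumes "atom2 r A" shows "size A \<le> Suc r"
proof (rule ccontr)
  assume long: "\<not> size A \<le> Suc r"
  obtain g where "g \<in># A" using atom2_nonempty[OF assms] by blast
  define A' where "A' = A - {#g#}"
  have A: "A = add_mset g A'" using \<open>g \<in># A\<close> A'_def by simp
  have "r < size A'" using long A by simp
  have "seq_over r A'" using atom2_zero_sum_seq[OF assms] A unfolding zero_sum_seq_def by simp
  then obtain T where T: "T \<subseteq># A'" "T \<noteq> {#}" "seq_sum T = {}"
    using long_seq_has_zero_sum_subseq \<open>r < size A'\<close> by blast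
  have "T \<subseteq># A" using T(1) A subset_mset_add_mset_right by simp
  then have "T = A" using atom2_zero_sum_subseq[OF assms _ T(3)] T(2) by blast
  moreover have "size T \<le> size A'" using T(1) by (rule size_mset_mono)
  ultimately show False using A by simp
qed

lemma factorization_exists:
  assumes "zero_sum_seq r B" shows "\<exists>F. (\<forall>A\<in>#F. atom2 r A) \<and> sum_mset F = B"
  using assms
proof (induction "size B" arbitrary: B rule: less_induct)
  case less
  consider "B = {#}" | "atom2 r B" | "B \<noteq> {#}" "\<not> atom2 r B" by blast
  then show ?case
  proof cases
    case 1 then show ?thesis by (intro exI[of _ "{#}"]) simp
  next
    case 2 then show ?thesis by (intro exI[of _ "{#B#}"]) simp
  next
    case 3
    then obtain U V where UV: "B = U + V" "zero_sum_seq r U" "zero_sum_seq r V" "U \<noteq> {#}" "V \<noteq> {#}"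
      using less.prems unfolding atom2_def by blast
    then have "size U < size B" "size V < size B" by (auto simp: nonempty_has_size)
    then obtain FU FV where "(\<forall>A\<in>#FU. atom2 r A) \<and> sum_mset FU = U"
        "(\<forall>A\<in>#FV. atom2 r A) \<and> sum_mset FV = V"
      using less.hyps UV by meson
    then show ?thesis using UV by (intro exI[of _ "FU + FV"]) auto
  qed
qed

lemma factorization_of_atom:
  assumes A: "atom2 r A" and G: "\<forall>Z\<in>#G. atom2 r Z" "sum_mset G = A"
  shows "G = {#A#}"
proof -
  have "G \<noteq> {#}" using G(2) atom2_nonempty[OF A] by auto
  then obtain Z G' where G': "G = add_mset Z G'" by (meson multiset_cases)
  have Z: "atom2 r Z" using G(1) G' by simp
  have "zero_sum_seq r (sum_mset G')"
    using G(1) G' seq_sum_sum_mset_empty seq_over_sum_mset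
    unfolding zero_sum_seq_def atom2_def by auto
  moreover have AZ: "A = Z + sum_mset G'" using G' G(2) by simp
  ultimately have "Z = {#} \<or> sum_mset G' = {#}"
    using A Z unfolding atom2_def by blast
  then have G'0: "sum_mset G' = {#}" using atom2_nonempty[OF Z] by blast
  have "G' = {#}"
  proof (rule ccontr)
    assume "G' \<noteq> {#}"
    then obtain Z' where Z': "Z' \<in># G'" by (meson multiset_nonemptyE)
    then have "Z' = {#}" using mset_subset_eq_sum_mset[OF Z'] G'0 by simp
    moreover have "atom2 r Z'" using G(1) G' Z' by simp
    ultimately show False using atom2_nonempty by blast
  qed
  then show ?thesis using G' AZ by simp
qed

lemma factorization_size_bound:
  "\<forall>A\<in>#F. atom2 r A \<Longrightarrow> 2 * size F \<le> size (sum_mset F) + count (sum_mset F) {}"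
proof (induction F)
  case (add A F)
  then show ?case using atom2_size_count_empty[of r A] by simp
qed simp

section \<open>Sets of lengths\<close>

lemma mem_Lset_iff: "k \<in> Lset r B \<longleftrightarrow> (\<exists>F. size F = k \<and> (\<forall>A\<in>#F. atom2 r A) \<and> sum_mset F = B)"
  by (simp add: Lset_def)

lemma size_in_Lset: "\<forall>A\<in>#F. atom2 r A \<Longrightarrow> sum_mset F = B \<Longrightarrow> size F \<in> Lset r B"
  using mem_Lset_iff by blast

lemma Lset_le_half_size:
  assumes "{} \<notin># B" "k \<in> Lset r B" shows "2 * k \<le> size B"
proof -
  obtain F where F: "size F = k" "\<forall>A\<in>#F. atom2 r A" "sum_mset F = B"
    using assms(2) mem_Lset_iff by blast
  have "count B {} = 0" using assms(1) by (simp add: not_in_iff)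
  then show ?thesis using factorization_size_bound[OF F(2)] F(1,3) by simp
qed

lemma zero_notin_Lset: "B \<noteq> {#} \<Longrightarrow> 0 \<notin> Lset r B"
  by (auto simp: mem_Lset_iff)

lemma one_notin_Lset:
  assumes "B = P + Q" "zero_sum_seq r P" "zero_sum_seq r Q" "P \<noteq> {#}" "Q \<noteq> {#}"
  shows "1 \<notin> Lset r B"
proof
  assume "1 \<in> Lset r B"
  then obtain F where F: "size F = 1" "\<forall>A\<in>#F. atom2 r A" "sum_mset F = B"
    using mem_Lset_iff by blast
  then obtain A where "F = {#A#}" using size_1_singleton_mset by blast
  then have "atom2 r B" using F by simp
  then show False using assms unfolding atom2_def by blast
qed

lemma Lset_product_of_two_atoms:
  assumes "atom2 r U" "atom2 r V" "{} \<notin># U + V"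
  shows "Lset r (U + V) \<subseteq> {k. 2 \<le> k \<and> 2 * k \<le> size (U + V)}"
proof
  fix k assume k: "k \<in> Lset r (U + V)"
  have "U + V \<noteq> {#}" using atom2_nonempty[OF assms(1)] by simp
  then have "0 \<notin> Lset r (U + V)" by (rule zero_notin_Lset)
  then have "k \<noteq> 0" using k by metis
  moreover have "1 \<notin> Lset r (U + V)"
    using assms(1,2) atom2_zero_sum_seq atom2_nonempty by (intro one_notin_Lset) simp_all
  then have "k \<noteq> 1" using k by metis
  moreover have "2 * k \<le> size (U + V)" using Lset_le_half_size[OF assms(3) k] .
  ultimately show "k \<in> {k. 2 \<le> k \<and> 2 * k \<le> size (U + V)}" by simp
qed

text \<open>If B has no zero term and 2k = |B|, a factorization of length k consists of squares
  {#g, g#}; so an element occurring once in B rules out length k.\<close>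
lemma half_size_notin_Lset:
  assumes "{} \<notin># B" "size B = 2 * k" "count B x = 1"
  shows "k \<notin> Lset r B"
proof
  assume "k \<in> Lset r B"
  then obtain F where F: "size F = k" "\<forall>A\<in>#F. atom2 r A" "sum_mset F = B"
    using mem_Lset_iff by blast
  have "\<forall>A\<in>#F. 2 \<le> size A"
    using assms(1) F mset_subset_eq_sum_mset atom2_size_ge_2 by (metis mset_subset_eqD)
  then have sizes: "\<forall>A\<in>#F. size A = 2" using size_sum_mset_tight[of F 2] F assms(2) by simp
  obtain A where A: "A \<in># F" "x \<in># A"
    using assms(3) F(3) mem_sum_mset_iff by (metis count_eq_zero_iff zero_neq_one)
  then obtain g where "A = {#g, g#}" using atom2_size_2[of r A] F(2) sizes by metis
  then have "count A x = 2" using A(2) by auto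
  moreover have "count A x \<le> count B x"
    using mset_subset_eq_sum_mset[OF A(1)] F(3) by (simp add: mset_subset_eq_count)
  ultimately show False using assms(3) by simp
qed

lemma Lset_in_system_of_sets: "zero_sum_seq r B \<Longrightarrow> Lset r B \<in> system_of_sets r"
  unfolding system_of_sets_def by blast

lemma zero_sum_seq_atom_product: "atom2 r U \<Longrightarrow> atom2 r V \<Longrightarrow> zero_sum_seq r (U + V)"
  by (intro zero_sum_seq_union atom2_zero_sum_seq)

section \<open>Products of two atoms\<close>

locale atom_pair =
  fixes r :: nat and B U V :: "nat set multiset"
  assumes atom_U: "atom2 r U" and atom_V: "atom2 r V" and B_eq: "B = U + V"
    and size_U: "3 \<le> size U" and size_V: "3 \<le> size V"
begin

lemma swap: "atom_pair r B V U"
  by unfold_locales (simp_all add: atom_U atom_V size_U size_V B_eq add.commute)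

lemma count_U: "count U g = (if g \<in># U then 1 else 0)"
  by (rule count_eq_if_le_1[OF atom2_count_le_1[OF atom_U size_U]])

lemma count_V: "count V g = (if g \<in># V then 1 else 0)"
  by (rule count_eq_if_le_1[OF atom2_count_le_1[OF atom_V size_V]])

lemma empty_notin_B: "{} \<notin># B"
proof
  assume "{} \<in># B"
  then have "U = {#{}#} \<or> V = {#{}#}"
    using atom2_contains_empty[OF atom_U] atom2_contains_empty[OF atom_V] B_eq by auto
  then show False using size_U size_V by auto
qed

lemma zero_sum_seq_B: "zero_sum_seq r B"
  using atom_U atom_V B_eq zero_sum_seq_union atom2_zero_sum_seq by blast

lemma mem_U_V_if_count_ge_2: "2 \<le> count B g \<Longrightarrow> g \<in># U \<and> g \<in># V"
  using count_U[of g] count_V[of g] B_eq by (simp split: if_splits)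

lemma zero_sum_subseq_meets_U_minus_V:
  assumes "X \<subseteq># B" "seq_sum X = {}" "\<forall>g. count X g \<le> 1" "X \<noteq> {#}" "X \<noteq> V"
  shows "\<exists>g\<in>#X. g \<in># U \<and> g \<notin># V"
proof (rule ccontr)
  assume h: "\<not> (\<exists>g\<in>#X. g \<in># U \<and> g \<notin># V)"
  have "count X g \<le> count V g" for g
  proof (cases "g \<in># X")
    case True
    then have "g \<in># V" using h assms(1) B_eq by (metis mset_subset_eqD union_iff)
    then show ?thesis using assms(3) count_V[of g] by simp
  qed (simp add: not_in_iff)
  then have "X \<subseteq># V" by (simp add: subseteq_mset_def)
  then have "X = V" using atom2_zero_sum_subseq[OF atom_V _ assms(2)] assms(4) by blast
  then show False using assms(5) by contradiction
qed

lemma atom_size_ge_2: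
  assumes "\<forall>A\<in>#F. atom2 r A" "sum_mset F = B" "A \<in># F" shows "2 \<le> size A"
proof -
  have "{} \<notin># A" using empty_notin_B mset_subset_eq_sum_mset[OF assms(3)] assms(2)
    by (metis mset_subset_eqD)
  then show ?thesis using atom2_size_ge_2 assms(1,3) by blast
qed

lemma length_eq_2_if_U_mem:
  assumes "\<forall>A\<in>#F. atom2 r A" "sum_mset F = B" "U \<in># F" shows "size F = 2"
proof -
  obtain F' where F': "F = add_mset U F'" using assms(3) by (metis insert_DiffM)
  then have "sum_mset F' = V" using assms(2) B_eq by simp
  then have "F' = {#V#}" using factorization_of_atom[OF atom_V] assms(1) F' by simp
  then show ?thesis using F' by simp
qed

lemma factorization_size_le_outside_U:
  assumes "Y \<subseteq># B" "seq_sum Y = {}" "\<forall>g. count Y g \<le> 1" "\<not> U \<subseteq># Y"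
  obtains G where "\<forall>A\<in>#G. atom2 r A" "sum_mset G = Y"
    "size G \<le> size (filter_mset (\<lambda>g. g \<notin># U) Y)"
proof -
  have "zero_sum_seq r Y" using zero_sum_seq_subseq[OF zero_sum_seq_B assms(1,2)] .
  then obtain G where G: "\<forall>A\<in>#G. atom2 r A" "sum_mset G = Y" using factorization_exists by blast
  have "\<exists>g\<in>#Z. g \<notin># U" if Z: "Z \<in># G" for Z
  proof -
    have ZY: "Z \<subseteq># Y" using mset_subset_eq_sum_mset[OF Z] G(2) by simp
    have ZA: "atom2 r Z" using G(1) Z by simp
    have "Z \<subseteq># B" using ZY assms(1) by (rule subset_mset.order_trans)
    moreover have "\<forall>g. count Z g \<le> 1" using ZY assms(3) by (meson mset_subset_eq_count order_trans)
    moreover have "Z \<noteq> U" using ZY assms(4) by blast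
    ultimately have "\<exists>g\<in>#Z. g \<in># V \<and> g \<notin># U"
      using atom_pair.zero_sum_subseq_meets_U_minus_V[OF swap _ atom2_seq_sum[OF ZA] _ atom2_nonempty[OF ZA]]
      by blast
    then show ?thesis by blast
  qed
  then have "size G \<le> size (filter_mset (\<lambda>g. g \<notin># U) (sum_mset G))"
    by (intro size_le_size_filter_sum_mset) blast
  then show thesis using that G by simp
qed

lemma symmetric_diff_factorization:
  assumes X: "atom2 r X" "X \<subseteq># B" "3 \<le> size X" "X \<noteq> U" and d: "d \<in># X" "d \<in># U"
  obtains G where "\<forall>A\<in>#G. atom2 r A" "sum_mset G = (U - X) + (X - U)" "G \<noteq> {#}"
    "size G \<le> size (filter_mset (\<lambda>g. g \<notin># U) X)"
proof -
  define Y where "Y = (U - X) + (X - U)"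
  have count_X: "count X g = (if g \<in># X then 1 else 0)" for g
    by (rule count_eq_if_le_1[OF atom2_count_le_1[OF X(1,3)]])
  have "X - U \<subseteq># V" using X(2) B_eq by (simp add: subset_eq_diff_conv add.commute)
  then have "Y \<subseteq># B" unfolding Y_def B_eq by (simp add: subset_mset.add_mono)
  moreover have "seq_sum Y = {}"
    unfolding Y_def using atom2_seq_sum[OF atom_U] atom2_seq_sum[OF X(1)]
    by (rule seq_sum_symmetric_diff_empty)
  moreover have "\<forall>g. count Y g \<le> 1"
  proof
    fix g show "count Y g \<le> 1" unfolding Y_def using count_U[of g] count_X[of g] by simp
  qed
  moreover have "\<not> U \<subseteq># Y"
  proof
    assume "U \<subseteq># Y"
    then have "d \<in># Y" using d(2) by (rule mset_subset_eqD)
    then show False using d count_U[of d] count_X[of d] unfolding Y_def by (simp add: in_diff_count)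
  qed
  ultimately obtain G where G: "\<forall>A\<in>#G. atom2 r A" "sum_mset G = Y"
      "size G \<le> size (filter_mset (\<lambda>g. g \<notin># U) Y)"
    using factorization_size_le_outside_U by blast
  have "filter_mset (\<lambda>g. g \<notin># U) Y = filter_mset (\<lambda>g. g \<notin># U) X"
    unfolding Y_def multiset_eq_iff by (simp add: not_in_iff)
  moreover have "Y \<noteq> {#}"
  proof
    assume "Y = {#}"
    then have "U \<subseteq># X" "X \<subseteq># U" unfolding Y_def by (simp_all add: Diff_eq_empty_iff_mset)
    then show False using X(4) by simp
  qed
  ultimately have "G \<noteq> {#}" "size G \<le> size (filter_mset (\<lambda>g. g \<notin># U) X)"
    using G(2,3) by auto
  then show thesis using that[OF G(1) G(2)[unfolded Y_def]] by blast
qed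

lemma decomposition_along_subseq:
  assumes "X \<subseteq># B" "\<forall>g. count X g \<le> 1"
  shows "B = filter_mset (\<lambda>g. g \<in># U \<and> g \<in># V) X + filter_mset (\<lambda>g. g \<in># U \<and> g \<in># V) X
    + ((U - X) + (X - U)) + ((V - X) + (X - V))"
  unfolding multiset_eq_iff
proof
  fix g
  have "count X g \<le> count U g + count V g" using mset_subset_eq_count[OF assms(1)] B_eq by simp
  then show "count B g = count (filter_mset (\<lambda>g. g \<in># U \<and> g \<in># V) X
    + filter_mset (\<lambda>g. g \<in># U \<and> g \<in># V) X + ((U - X) + (X - U)) + ((V - X) + (X - V))) g"
    using count_U[of g] count_V[of g] assms(2) B_eq by (simp split: if_splits)
qed

lemma size_split_subseq:
  assumes "X \<subseteq># B"
  shows "size X = size (filter_mset (\<lambda>g. g \<in># U \<and> g \<in># V) X)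
    + size (filter_mset (\<lambda>g. g \<notin># U) X) + size (filter_mset (\<lambda>g. g \<notin># V) X)"
proof -
  have UV: "g \<in># U \<or> g \<in># V" if "g \<in># X" for g
    using mset_subset_eqD[OF assms that] B_eq by simp
  have "X = filter_mset (\<lambda>g. g \<in># U \<and> g \<in># V) X
      + filter_mset (\<lambda>g. g \<notin># U) X + filter_mset (\<lambda>g. g \<notin># V) X"
    unfolding multiset_eq_iff
  proof
    fix g
    show "count X g = count (filter_mset (\<lambda>g. g \<in># U \<and> g \<in># V) X
      + filter_mset (\<lambda>g. g \<notin># U) X + filter_mset (\<lambda>g. g \<notin># V) X) g"
      using UV[of g] by (cases "g \<in># X"; cases "g \<in># U"; cases "g \<in># V") (simp_all add: count_eq_zero_iff)
  qed
  then show ?thesis by (metis size_union)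
qed

lemma shorter_factorization:
  assumes F: "\<forall>A\<in>#F. atom2 r A" "sum_mset F = B" and "U \<notin># F" "V \<notin># F"
    and X: "X \<in># F" "3 \<le> size X" and d: "d \<in># X" "d \<in># U" "d \<in># V"
  obtains F' where "\<forall>A\<in>#F'. atom2 r A" "sum_mset F' = B" "3 \<le> size F'" "size F' \<le> size X"
proof -
  have XA: "atom2 r X" using F(1) X(1) by simp
  have XB: "X \<subseteq># B" using mset_subset_eq_sum_mset[OF X(1)] F(2) by simp
  have "X \<noteq> U" "X \<noteq> V" using assms(3,4) X(1) by auto
  obtain G1 where G1: "\<forall>A\<in>#G1. atom2 r A" "sum_mset G1 = (U - X) + (X - U)" "G1 \<noteq> {#}"
      "size G1 \<le> size (filter_mset (\<lambda>g. g \<notin># U) X)"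
    using symmetric_diff_factorization[OF XA XB X(2) \<open>X \<noteq> U\<close> d(1,2)] .
  obtain G2 where G2: "\<forall>A\<in>#G2. atom2 r A" "sum_mset G2 = (V - X) + (X - V)" "G2 \<noteq> {#}"
      "size G2 \<le> size (filter_mset (\<lambda>g. g \<notin># V) X)"
    using atom_pair.symmetric_diff_factorization[OF swap XA XB X(2) \<open>X \<noteq> V\<close> d(1,3)] .
  define Q where "Q = filter_mset (\<lambda>g. g \<in># U \<and> g \<in># V) X"
  define F' where "F' = image_mset (\<lambda>g. {#g, g#}) Q + G1 + G2"
  have "\<forall>A\<in>#F'. atom2 r A"
  proof -
    have "atom2 r {#g, g#}" if "g \<in># Q" for g
    proof (rule atom2_double)
      have "g \<in># B" using that B_eq unfolding Q_def by simp
      then show "g \<noteq> {}" "elem2 r g"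
        using empty_notin_B zero_sum_seq_B by (auto simp: zero_sum_seq_def seq_over_def)
    qed
    then show ?thesis using G1(1) G2(1) unfolding F'_def by auto
  qed
  moreover have "sum_mset F' = B"
    using decomposition_along_subseq[OF XB allI[OF atom2_count_le_1[OF XA X(2)]]] G1(2) G2(2)
    unfolding F'_def Q_def by (simp add: sum_mset_image_double)
  moreover have "size F' \<le> size X"
    using size_split_subseq[OF XB] G1(4) G2(4) unfolding F'_def Q_def by simp
  moreover have "Q \<noteq> {#}" using d unfolding Q_def by auto
  then have "3 \<le> size F'"
    using G1(3) G2(3) unfolding F'_def by (simp add: nonempty_has_size Suc_le_eq)
  ultimately show thesis using that by blast
qed

end

locale atom_pair_lengths = atom_pair +
  assumes r_ge_6: "6 \<le> r" and Lset_B: "Lset r B = {2, r - 1, r}"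
begin

lemma length_cases:
  assumes "\<forall>A\<in>#F. atom2 r A" "sum_mset F = B" shows "size F = 2 \<or> r - 1 \<le> size F"
  using size_in_Lset[OF assms] Lset_B by auto

lemma size_B_le: "size B \<le> 2 * r + 2"
  using atom2_size_le[OF atom_U] atom2_size_le[OF atom_V] B_eq by simp

lemma long_factorization_avoids_U_V:
  assumes "\<forall>A\<in>#F. atom2 r A" "sum_mset F = B" "r - 1 \<le> size F" shows "U \<notin># F" "V \<notin># F"
  using length_eq_2_if_U_mem[OF assms(1,2)] atom_pair.length_eq_2_if_U_mem[OF swap assms(1,2)]
    assms(3) r_ge_6 by auto

lemma long_atom_if_contains_common:
  assumes "\<forall>A\<in>#F. atom2 r A" "sum_mset F = B" "U \<notin># F" "V \<notin># F"
    and "X \<in># F" "3 \<le> size X" "d \<in># X" "d \<in># U" "d \<in># V"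
  shows "r - 1 \<le> size X"
proof -
  obtain F' where F': "\<forall>A\<in>#F'. atom2 r A" "sum_mset F' = B" "3 \<le> size F'" "size F' \<le> size X"
    using shorter_factorization[OF assms] .
  then show ?thesis using length_cases[OF F'(1,2)] by linarith
qed

text \<open>Two atoms of a long factorization share the common element d, each of them has
  length at least r - 1, and then B would be too long.\<close>
lemma common_notin_long_factorization_atom:
  assumes F: "\<forall>A\<in>#F. atom2 r A" "sum_mset F = B" "r - 1 \<le> size F"
    and X: "X \<in># F" "3 \<le> size X" and d: "d \<in># X"
  shows "\<not> (d \<in># U \<and> d \<in># V)"
proof
  assume dUV: "d \<in># U \<and> d \<in># V"
  note avoids = long_factorization_avoids_U_V[OF F]
  have X_long: "r - 1 \<le> size X"
    using long_atom_if_contains_common[OF F(1,2) avoids X d] dUV by blast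
  obtain F0 where F0: "F = add_mset X F0" using X(1) by (metis insert_DiffM)
  have "count X d = 1"
    using count_eq_if_le_1[OF atom2_count_le_1[of r X]] F(1) X d F0 by simp
  moreover have "count B d = 2" using count_U[of d] count_V[of d] dUV B_eq by simp
  moreover have "count B d = count X d + count (sum_mset F0) d" using F(2) F0 by auto
  ultimately have "0 < count (sum_mset F0) d" by linarith
  then have "d \<in># sum_mset F0" by (simp only: count_greater_zero_iff)
  then obtain Y where Y: "Y \<in># F0" "d \<in># Y" using mem_sum_mset_iff by blast
  obtain F1 where F1: "F0 = add_mset Y F1" using Y(1) by (metis insert_DiffM)
  have YF: "Y \<in># F" using Y(1) F0 by simp
  have B_XY: "B = X + Y + sum_mset F1" using F(2) F0 F1 by (simp add: add.assoc)
  have "size Y \<noteq> 2"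
  proof
    assume "size Y = 2"
    then obtain g where "Y = {#g, g#}" using atom2_size_2 F(1) YF by metis
    then have "3 \<le> count B d" using Y(2) B_XY \<open>count X d = 1\<close> by auto
    then show False using \<open>count B d = 2\<close> by simp
  qed
  then have "3 \<le> size Y" using atom_size_ge_2[OF F(1,2) YF] by simp
  then have Y_long: "r - 1 \<le> size Y"
    using long_atom_if_contains_common[OF F(1,2) avoids YF] Y(2) dUV by blast
  have "2 * size F1 \<le> size (sum_mset F1)"
    using atom_size_ge_2[OF F(1,2)] F0 F1 by (intro size_sum_mset_ge) simp
  moreover have "size F = size F1 + 2" using F0 F1 by simp
  ultimately have "2 * (r - 1) + 2 * (r - 3) \<le> size B"
    using X_long Y_long F(3) B_XY by simp
  then show False using size_B_le r_ge_6 by linarith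
qed

lemma long_factorization_filter_common:
  assumes F: "\<forall>A\<in>#F. atom2 r A" "sum_mset F = B" "r - 1 \<le> size F"
  shows "filter_mset (\<lambda>g. g \<in># U \<and> g \<in># V) B = sum_mset (filter_mset (\<lambda>A. size A = 2) F)"
    "filter_mset (\<lambda>g. \<not> (g \<in># U \<and> g \<in># V)) B = sum_mset (filter_mset (\<lambda>A. size A \<noteq> 2) F)"
proof -
  have blocks: "filter_mset (\<lambda>g. g \<in># U \<and> g \<in># V) A = (if size A = 2 then A else {#})"
    if A: "A \<in># F" for A
  proof (cases "size A = 2")
    case True
    have "atom2 r A" using F(1) A by simp
    then obtain g where g: "A = {#g, g#}" using True by (rule atom2_size_2)
    have "A \<subseteq># B" using mset_subset_eq_sum_mset[OF A] F(2) by simp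
    then have "count A g \<le> count B g" by (rule mset_subset_eq_count)
    then show ?thesis using mem_U_V_if_count_ge_2 g by simp
  next
    case False
    then have "3 \<le> size A" using atom_size_ge_2[OF F(1,2) A] by simp
    then show ?thesis using common_notin_long_factorization_atom[OF F A] False by auto
  qed
  show common: "filter_mset (\<lambda>g. g \<in># U \<and> g \<in># V) B = sum_mset (filter_mset (\<lambda>A. size A = 2) F)"
    unfolding F(2)[symmetric] using blocks by (rule filter_mset_sum_mset_blocks)
  have "B = filter_mset (\<lambda>g. g \<in># U \<and> g \<in># V) B + filter_mset (\<lambda>g. \<not> (g \<in># U \<and> g \<in># V)) B"
    "B = sum_mset (filter_mset (\<lambda>A. size A = 2) F) + sum_mset (filter_mset (\<lambda>A. size A \<noteq> 2) F)"
    using multiset_partition[of B] multiset_partition[of F "\<lambda>A. size A = 2"] F(2) by (metis sum_mset.union)+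
  then show "filter_mset (\<lambda>g. \<not> (g \<in># U \<and> g \<in># V)) B = sum_mset (filter_mset (\<lambda>A. size A \<noteq> 2) F)"
    using common by (metis add_left_imp_eq)
qed

lemma long_factorization_size:
  assumes F: "\<forall>A\<in>#F. atom2 r A" "sum_mset F = B" "r - 1 \<le> size F"
  shows "2 * size F = size (filter_mset (\<lambda>g. g \<in># U \<and> g \<in># V) B)
    + 2 * size (filter_mset (\<lambda>A. size A \<noteq> 2) F)"
proof -
  have "size (filter_mset (\<lambda>g. g \<in># U \<and> g \<in># V) B) = 2 * size (filter_mset (\<lambda>A. size A = 2) F)"
    unfolding long_factorization_filter_common(1)[OF F] by (rule size_sum_mset_eq) simp
  moreover have "size F = size (filter_mset (\<lambda>A. size A = 2) F) + size (filter_mset (\<lambda>A. size A \<noteq> 2) F)"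
    by (metis multiset_partition size_union)
  ultimately show ?thesis by simp
qed

text \<open>Compare factorizations of lengths r and r - 1: both contain the same squares, so their
  remaining atoms factor the same sequence with k + 1 and k atoms, each of length at least 3.
  The bound on the size of B forces k = 1, i.e. an atom with a factorization of length 2.\<close>
lemma lengths_inconsistent: False
proof -
  obtain Fr where Fr: "size Fr = r" "\<forall>A\<in>#Fr. atom2 r A" "sum_mset Fr = B"
    using Lset_B mem_Lset_iff[of r r B] by auto
  obtain Fs where Fs: "size Fs = r - 1" "\<forall>A\<in>#Fs. atom2 r A" "sum_mset Fs = B"
    using Lset_B mem_Lset_iff[of "r - 1" r B] by auto
  define Nr where "Nr = filter_mset (\<lambda>A. size A \<noteq> 2) Fr"
  define Ns where "Ns = filter_mset (\<lambda>A. size A \<noteq> 2) Fs"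
  define P where "P = filter_mset (\<lambda>g. \<not> (g \<in># U \<and> g \<in># V)) B"
  have long_r: "r - 1 \<le> size Fr" and long_s: "r - 1 \<le> size Fs" using Fr(1) Fs(1) by simp_all
  have "size Nr = size Ns + 1"
    using long_factorization_size[OF Fr(2,3) long_r] long_factorization_size[OF Fs(2,3) long_s]
      Fr(1) Fs(1) r_ge_6 unfolding Nr_def Ns_def by simp
  have Nr: "\<forall>A\<in>#Nr. atom2 r A" "sum_mset Nr = P"
    using Fr(2) long_factorization_filter_common(2)[OF Fr(2,3) long_r] unfolding Nr_def P_def by auto
  have Ns: "\<forall>A\<in>#Ns. atom2 r A" "sum_mset Ns = P"
    using Fs(2) long_factorization_filter_common(2)[OF Fs(2,3) long_s] unfolding Ns_def P_def by auto
  have "3 * size Nr \<le> size P"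
    unfolding Nr(2)[symmetric] using atom_size_ge_2[OF Fr(2,3)] unfolding Nr_def
    by (intro size_sum_mset_ge) fastforce
  moreover have "size B = size (filter_mset (\<lambda>g. g \<in># U \<and> g \<in># V) B) + size P"
    unfolding P_def by (metis multiset_partition size_union)
  ultimately have "size Nr \<le> 2"
    using long_factorization_size[OF Fr(2,3) long_r, folded Nr_def] Fr(1) size_B_le by linarith
  moreover have "Ns \<noteq> {#}"
  proof
    assume "Ns = {#}"
    then have "P = {#}" using Ns(2) by simp
    then show False using \<open>3 * size Nr \<le> size P\<close> \<open>size Nr = size Ns + 1\<close> by simp
  qed
  moreover have "size Ns \<noteq> 1"
  proof
    assume "size Ns = 1"
    then obtain X where "Ns = {#X#}" using size_1_singleton_mset by blast
    then have "atom2 r P" using Ns by simp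
    then have "Nr = {#P#}" using factorization_of_atom Nr by blast
    then show False using \<open>size Nr = size Ns + 1\<close> \<open>size Ns = 1\<close> by simp
  qed
  ultimately show False using \<open>size Nr = size Ns + 1\<close> by (simp add: nonempty_has_size)
qed

end

lemma long_atom_if_length_r:
  assumes U: "atom2 r U" and V: "atom2 r V" and "5 \<le> r" "r \<in> Lset r (U + V)"
  shows "r - 1 \<le> size U"
proof -
  obtain F where F: "size F = r" "\<forall>A\<in>#F. atom2 r A" "sum_mset F = U + V"
    using assms(4) mem_Lset_iff by blast
  have bound: "2 * r \<le> size U + size V + count U {} + count V {}"
    using factorization_size_bound[OF F(2)] F(1,3) by simp
  have sizes: "size U \<le> Suc r" "size V \<le> Suc r" using atom2_size_le U V by blast+
  have counts: "count U {} \<le> 1" "count V {} \<le> 1" using atom2_count_empty_le_1 U V by blast+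
  have "{} \<notin># U" "{} \<notin># V"
    using atom2_contains_empty[OF U] atom2_contains_empty[OF V] bound sizes counts assms(3)
    by force+
  then show ?thesis using bound sizes(2) by (simp add: not_in_iff)
qed

lemma Lset_ne_2_rm1_r: "6 \<le> r \<Longrightarrow> Lset r B \<noteq> {2, r - 1, r}"
proof
  assume r: "6 \<le> r" and L: "Lset r B = {2, r - 1, r}"
  obtain F where F: "size F = 2" "\<forall>A\<in>#F. atom2 r A" "sum_mset F = B"
    using L mem_Lset_iff[of 2 r B] by auto
  then obtain U V where "F = {#U, V#}" using size_eq_2_mset by blast
  then have UV: "atom2 r U" "atom2 r V" "B = U + V" using F by auto
  have "r - 1 \<le> size U" "r - 1 \<le> size V"
    using long_atom_if_length_r[of r U V] long_atom_if_length_r[of r V U] UV L r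
    by (simp_all add: add.commute)
  then interpret atom_pair_lengths r B U V
    using UV r L by unfold_locales simp_all
  show False by (rule lengths_inconsistent)
qed

section \<open>Examples for r = 3, 4, 5\<close>

fun triangular :: "nat set list \<Rightarrow> bool" where
  "triangular [] = True"
| "triangular (y # ys) \<longleftrightarrow> (\<exists>c\<in>y. \<forall>z\<in>set ys. c \<notin> z) \<and> triangular ys"

lemma triangular_subseq_sum_nonempty:
  "triangular ys \<Longrightarrow> distinct ys \<Longrightarrow> Z \<subseteq># mset ys \<Longrightarrow> Z \<noteq> {#} \<Longrightarrow> seq_sum Z \<noteq> {}"
proof (induction ys arbitrary: Z)
  case (Cons y ys)
  show ?case
  proof (cases "y \<in># Z")
    case True
    obtain c where c: "c \<in> y" "\<forall>z\<in>set ys. c \<notin> z" using Cons.prems(1) by auto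
    define Z' where "Z' = Z - {#y#}"
    have Z: "Z = add_mset y Z'" using True Z'_def by simp
    have "Z' \<subseteq># mset ys" using Cons.prems(3) Z by simp
    then have "\<forall>z\<in>#Z'. c \<notin> z" using c(2) by (meson in_multiset_in_set mset_subset_eqD)
    then have e: "filter_mset (\<lambda>g. c \<in> g) Z' = {#}" by simp
    have "c \<notin> seq_sum Z'" unfolding mem_seq_sum_iff e by simp
    then have "c \<in> seq_sum Z" using Z c(1) mem_seq_sum_add_mset by blast
    then show ?thesis by auto
  next
    case False
    then have "Z \<subseteq># mset ys" using Cons.prems(3) subset_mset_add_mset_notin by simp
    then show ?thesis using Cons by simp
  qed
qed simp

lemma triangular_atom2:
  assumes "distinct (y0 # ys)" "\<forall>y\<in>set (y0 # ys). elem2 r y" "seq_sum (mset (y0 # ys)) = {}"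
    "triangular ys"
  shows "atom2 r (mset (y0 # ys))"
  unfolding atom2_def
proof (intro conjI allI impI)
  show "zero_sum_seq r (mset (y0 # ys))" using assms(2,3) by (simp add: zero_sum_seq_def seq_over_def)
  fix P Q assume PQ: "mset (y0 # ys) = P + Q \<and> zero_sum_seq r P \<and> zero_sum_seq r Q"
  have ys: "distinct ys" "y0 \<notin> set ys" using assms(1) by auto
  have sub: "P \<subseteq># add_mset y0 (mset ys)" "Q \<subseteq># add_mset y0 (mset ys)" using PQ by simp_all
  have small: "X = {#}" if "X \<subseteq># add_mset y0 (mset ys)" "y0 \<notin># X" "seq_sum X = {}" for X
    using triangular_subseq_sum_nonempty[OF assms(4) ys(1) subset_mset_add_mset_notin[OF that(1,2)]]
      that(3) by blast
  have m: "add_mset y0 (mset ys) = P + Q" using PQ by simp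
  have "count (mset ys) y0 = 0" using ys(2) by (simp add: count_mset_0_iff)
  then have "count (add_mset y0 (mset ys)) y0 = 1" by simp
  then have "count P y0 + count Q y0 = 1" unfolding m by simp
  then have "y0 \<notin># P \<or> y0 \<notin># Q" by (auto simp: add_is_1 count_eq_zero_iff)
  then show "P = {#} \<or> Q = {#}" using small sub PQ unfolding zero_sum_seq_def by metis
qed simp

text \<open>Distinctness of explicitly given subsets of {0..4} is decided through their
  characteristic bit lists.\<close>
definition bits5 :: "nat set \<Rightarrow> bool list" where
  "bits5 A = [0 \<in> A, 1 \<in> A, 2 \<in> A, 3 \<in> A, 4 \<in> A]"

lemma eq_iff_bits5_eq: "A \<subseteq> {..<5} \<Longrightarrow> B \<subseteq> {..<5} \<Longrightarrow> A = B \<longleftrightarrow> bits5 A = bits5 B"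
proof
  assume "A \<subseteq> {..<5}" "B \<subseteq> {..<5}" "bits5 A = bits5 B"
  moreover have "\<forall>i\<in>{0, 1, 2, 3, 4::nat}. i \<in> A \<longleftrightarrow> i \<in> B"
    using \<open>bits5 A = bits5 B\<close> by (simp add: bits5_def)
  moreover have "{..<5::nat} = {0, 1, 2, 3, 4}" by auto
  ultimately show "A = B" by blast
qed simp

lemma triangular_atom2_bits5:
  assumes "distinct (map bits5 (y0 # ys))" "\<forall>y\<in>set (y0 # ys). elem2 r y"
    "seq_sum (mset (y0 # ys)) = {}" "triangular ys"
  shows "atom2 r (mset (y0 # ys))"
  using triangular_atom2[of y0 ys r] assms distinct_map by blast

abbreviation "U3 \<equiv> mset [{0, 1}, {0}, {1::nat}]"

lemma atom2_U3: "atom2 3 U3"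
  by (rule triangular_atom2_bits5) (simp_all add: bits5_def elem2_def seq_sum_def)

lemma Lset_U3_U3: "Lset 3 (U3 + U3) = {2, 3}"
proof
  show "Lset 3 (U3 + U3) \<subseteq> {2, 3}"
    using Lset_product_of_two_atoms[OF atom2_U3 atom2_U3] by auto
  have "size {#U3, U3#} \<in> Lset 3 (U3 + U3)"
    by (rule size_in_Lset) (use atom2_U3 in auto)
  moreover have "size {#{#{0::nat}, {0}#}, {#{1}, {1}#}, {#{0, 1}, {0, 1}#}#} \<in> Lset 3 (U3 + U3)"
    by (rule size_in_Lset) (auto intro!: atom2_double simp: elem2_def add_mset_commute)
  ultimately show "{2, 3} \<subseteq> Lset 3 (U3 + U3)" by (simp add: eval_nat_numeral)
qed

abbreviation "U4 \<equiv> mset [{0, 1, 2, 3}, {0}, {1}, {2}, {3::nat}]"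

abbreviation "V4 \<equiv> mset [{2, 3}, {0, 1, 3}, {0}, {1}, {2::nat}]"

lemma atom2_U4: "atom2 4 U4"
  by (rule triangular_atom2_bits5) (simp_all add: bits5_def elem2_def seq_sum_def)

lemma atom2_V4: "atom2 4 V4"
  by (rule triangular_atom2_bits5) (simp_all add: bits5_def elem2_def seq_sum_def)

lemma Lset_U4_V4: "Lset 4 (U4 + V4) = {2, 3, 4}"
proof
  show "Lset 4 (U4 + V4) \<subseteq> {2, 3, 4}"
  proof
    fix k assume k: "k \<in> Lset 4 (U4 + V4)"
    then have "2 \<le> k" "2 * k \<le> 10" using Lset_product_of_two_atoms[OF atom2_U4 atom2_V4] by auto
    moreover have "5 \<notin> Lset 4 (U4 + V4)"
      by (rule half_size_notin_Lset[where x = "{3}"]) (simp_all add: eq_iff_bits5_eq bits5_def)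
    then have "k \<noteq> 5" using k by blast
    ultimately show "k \<in> {2, 3, 4}" by auto
  qed
  have "size {#U4, V4#} \<in> Lset 4 (U4 + V4)"
    by (rule size_in_Lset) (use atom2_U4 atom2_V4 in auto)
  moreover have "atom2 4 (mset [{0, 1, 3}, {0}, {1}, {3::nat}])"
    "atom2 4 (mset [{0, 1, 2, 3}, {2, 3}, {0}, {1::nat}])"
    by (rule triangular_atom2_bits5; simp add: bits5_def elem2_def seq_sum_def)+
  then have "size {#mset [{0, 1, 3}, {0}, {1}, {3::nat}], mset [{0, 1, 2, 3}, {2, 3}, {0}, {1}],
      {#{2}, {2}#}#} \<in> Lset 4 (U4 + V4)"
    by (intro size_in_Lset) (auto intro!: atom2_double simp: elem2_def add_mset_commute)
  moreover have "atom2 4 (mset [{0, 1, 2, 3}, {0, 1, 3}, {2, 3}, {3::nat}])"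
    by (rule triangular_atom2_bits5) (simp_all add: bits5_def elem2_def seq_sum_def)
  then have "size {#mset [{0, 1, 2, 3}, {0, 1, 3}, {2, 3}, {3::nat}], {#{0}, {0}#}, {#{1}, {1}#},
      {#{2}, {2}#}#} \<in> Lset 4 (U4 + V4)"
    by (intro size_in_Lset) (auto intro!: atom2_double simp: elem2_def add_mset_commute)
  ultimately show "{2, 3, 4} \<subseteq> Lset 4 (U4 + V4)" by (simp add: eval_nat_numeral)
qed

abbreviation "U5 \<equiv> mset [{0, 1, 2, 3, 4}, {0}, {1}, {2}, {3}, {4::nat}]"

abbreviation "V5 \<equiv> mset [{2, 3, 4}, {0, 1, 4}, {0}, {1}, {2}, {3::nat}]"

lemma atom2_U5: "atom2 5 U5"
  by (rule triangular_atom2_bits5) (simp_all add: bits5_def elem2_def seq_sum_def)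

lemma atom2_V5: "atom2 5 V5"
  by (rule triangular_atom2_bits5) (simp_all add: bits5_def elem2_def seq_sum_def)

interpretation UV5: atom_pair 5 "U5 + V5" U5 V5
  using atom2_U5 atom2_V5 by unfold_locales simp_all

lemma U5_minus_V5: "g \<in># U5 \<Longrightarrow> g \<notin># V5 \<Longrightarrow> 4 \<in> g \<and> (0 \<in> g \<longleftrightarrow> 2 \<in> g)"
  by auto

text \<open>Each atom of size other than 2 contains one of the two elements of U5 not in V5,
  both of which satisfy P.\<close>
lemma U5_V5_nonsquare_atoms_le_2:
  assumes F: "\<forall>A\<in>#F. atom2 5 A" "sum_mset F = U5 + V5" "V5 \<notin># F"
  shows "size (filter_mset (\<lambda>A. size A \<noteq> 2) F) \<le> 2"
proof -
  define N where "N = filter_mset (\<lambda>A. size A \<noteq> 2) F"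
  define P where "P = (\<lambda>g::nat set. 4 \<in> g \<and> (0 \<in> g \<longleftrightarrow> 2 \<in> g))"
  have "\<exists>g\<in>#X. P g" if X: "X \<in># N" for X
  proof -
    have XF: "X \<in># F" and XA: "atom2 5 X" and "3 \<le> size X"
      using X F(1) UV5.atom_size_ge_2[OF F(1,2)] unfolding N_def by fastforce+
    have "X \<subseteq># U5 + V5" using mset_subset_eq_sum_mset[OF XF] F(2) by simp
    moreover have "X \<noteq> V5" using F(3) XF by auto
    ultimately have "\<exists>g\<in>#X. g \<in># U5 \<and> g \<notin># V5"
      using atom2_seq_sum[OF XA] allI[OF atom2_count_le_1[OF XA \<open>3 \<le> size X\<close>]] atom2_nonempty[OF XA]
      by (intro UV5.zero_sum_subseq_meets_U_minus_V)
    then show ?thesis using U5_minus_V5 unfolding P_def by blast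
  qed
  then have "size N \<le> size (filter_mset P (sum_mset N))" by (intro size_le_size_filter_sum_mset) blast
  also have "\<dots> \<le> size (filter_mset P (U5 + V5))"
    unfolding N_def F(2)[symmetric] by (intro size_mset_mono multiset_filter_mono sum_mset_filter_subseteq)
  also have "\<dots> = 2" by (simp add: P_def)
  finally show ?thesis unfolding N_def .
qed

lemma U5_V5_length_3_shape:
  assumes F: "\<forall>A\<in>#F. atom2 5 A" "sum_mset F = U5 + V5" "size F = 3"
  obtains g X1 X2 where "F = {#{#g, g#}, X1, X2#}" "3 \<le> size X1" "3 \<le> size X2"
proof -
  have "V5 \<notin># F" using atom_pair.length_eq_2_if_U_mem[OF UV5.swap F(1,2)] F(3) by auto
  define N where "N = filter_mset (\<lambda>A. size A \<noteq> 2) F"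
  define Sq where "Sq = filter_mset (\<lambda>A. size A = 2) F"
  have F_split: "F = Sq + N" unfolding Sq_def N_def by (rule multiset_partition)
  have B_split: "U5 + V5 = sum_mset Sq + sum_mset N" using F(2) F_split by simp
  have N_long: "3 \<le> size X" "atom2 5 X" if "X \<in># N" for X
    using that F(1) UV5.atom_size_ge_2[OF F(1,2)] unfolding N_def by fastforce+
  have "size (sum_mset N) \<le> 6 * size N"
  proof (rule size_sum_mset_le, rule ballI)
    fix X assume "X \<in># N"
    then show "size X \<le> 6" using atom2_size_le[OF N_long(2)] by fastforce
  qed
  moreover have "size (sum_mset Sq) = 2 * size Sq" unfolding Sq_def by (rule size_sum_mset_eq) simp
  moreover have "size Sq + size N = 3" using F(3) F_split by (metis size_union)
  moreover have "size (sum_mset Sq) + size (sum_mset N) = 12"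
  proof -
    have "size (U5 + V5) = 12" by simp
    then show ?thesis by (simp only: B_split size_union)
  qed
  ultimately have "size N = 2" "size Sq = 1"
    using U5_V5_nonsquare_atoms_le_2[OF F(1,2) \<open>V5 \<notin># F\<close>] unfolding N_def[symmetric] by linarith+
  then obtain S X1 X2 where Sq: "Sq = {#S#}" and N: "N = {#X1, X2#}"
    using size_1_singleton_mset size_eq_2_mset by metis
  have "S \<in># Sq" using Sq by simp
  then have "atom2 5 S" "size S = 2" using F(1) unfolding Sq_def by simp_all
  then obtain g where "S = {#g, g#}" by (rule atom2_size_2)
  moreover have "3 \<le> size X1" "3 \<le> size X2" using N_long(1) N by simp_all
  ultimately show thesis using that F_split Sq N by (simp add: add_mset_commute)
qed

lemma U5_V5_filter_4: "filter_mset (\<lambda>h. 4 \<in> h) (U5 + V5) = mset [{0, 1, 2, 3, 4}, {4}, {2, 3, 4}, {0, 1, 4}]"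
  by simp

lemma U5_V5_filter_not_4:
  "filter_mset (\<lambda>h. 4 \<notin> h) (U5 + V5) = mset [{0}, {1}, {2}, {3}, {0}, {1}, {2}, {3::nat}]"
  by simp

lemma U5_V5_count_ge_2_singleton:
  assumes "2 \<le> count (U5 + V5) g" shows "g \<in> {{0}, {1}, {2}, {3}}"
proof (cases "4 \<in> g")
  case True
  have "distinct [{0, 1, 2, 3, 4}, {4}, {2, 3, 4}, {0, 1, 4::nat}]"
    using distinct_map[of bits5 "[{0, 1, 2, 3, 4}, {4}, {2, 3, 4}, {0, 1, 4::nat}]"]
    by (simp add: bits5_def)
  have "count (U5 + V5) g = count (filter_mset (\<lambda>h. 4 \<in> h) (U5 + V5)) g"
    by (simp only: count_filter_mset if_P[OF True])
  also have "\<dots> = count (mset [{0, 1, 2, 3, 4}, {4}, {2, 3, 4}, {0, 1, 4::nat}]) g"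
    by (simp only: U5_V5_filter_4)
  also have "\<dots> \<le> 1" using \<open>distinct _\<close> by (metis distinct_count_atmost_1 le_refl zero_le_one)
  finally show ?thesis using assms by simp
next
  case False
  have "count (filter_mset (\<lambda>h. 4 \<notin> h) (U5 + V5)) g = count (U5 + V5) g"
    by (simp only: count_filter_mset if_P[OF False])
  then have "g \<in># filter_mset (\<lambda>h. 4 \<notin> h) (U5 + V5)"
    using assms by (simp only: count_greater_zero_iff[symmetric])
  then show ?thesis unfolding U5_V5_filter_not_4 by auto
qed

lemma U5_V5_count_avoiding_4:
  assumes "4 \<notin> h" shows "count (U5 + V5) h = (if h \<in> {{0}, {1}, {2}, {3}} then 2 else 0)"
proof -
  have "count (U5 + V5) h = count (filter_mset (\<lambda>h. 4 \<notin> h) (U5 + V5)) h"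
    by (simp only: count_filter_mset if_P[OF assms])
  also have "\<dots> = count (mset [{0}, {1}, {2}, {3}, {0}, {1}, {2}, {3::nat}]) h"
    by (simp only: U5_V5_filter_not_4)
  also have "\<dots> = (if h \<in> {{0}, {1}, {2}, {3}} then 2 else 0)"
    by (auto simp: count_mset_0_iff)
  finally show ?thesis .
qed

lemma U5_V5_square_split_avoiding_4:
  assumes g: "g \<in> {{0}, {1}, {2}, {3}}" and B: "U5 + V5 = {#g, g#} + X1 + X2"
    and X: "\<forall>h. count X1 h \<le> 1" "\<forall>h. count X2 h \<le> 1"
  shows "filter_mset (\<lambda>h. 4 \<notin> h) X1 = mset_set ({{0}, {1}, {2}, {3}} - {g})"
  unfolding multiset_eq_iff
proof
  fix h
  define D where "D = {{0}, {1}, {2}, {3::nat}}"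
  have "count X1 h = (if h \<in> D \<and> h \<noteq> g then 1 else 0)" if "4 \<notin> h"
  proof -
    have "count (U5 + V5) h = count {#g, g#} h + count X1 h + count X2 h"
      by (simp only: B count_union)
    moreover have "count {#g, g#} h = (if h = g then 2 else 0)" by simp
    moreover have "g \<in> D" using g unfolding D_def .
    ultimately show ?thesis
      using U5_V5_count_avoiding_4[OF that, folded D_def] X(1)[rule_format, of h]
        X(2)[rule_format, of h] by (auto split: if_splits)
  qed
  moreover have "finite (D - {g})" unfolding D_def by simp
  moreover have "h \<notin> D" if "4 \<in> h" using that unfolding D_def by auto
  ultimately show "count (filter_mset (\<lambda>h. 4 \<notin> h) X1) h = count (mset_set (D - {g})) h"
    by (cases "4 \<in> h") (simp_all add: count_mset_set)
qed

text \<open>The parity argument: the terms of X1 avoiding 4 are exactly the three singletons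
  other than g, so the coordinates 0..3 of X1 add up to an odd number.\<close>
lemma U5_V5_no_square_split:
  assumes g: "g \<in> {{0}, {1}, {2}, {3}}" and B: "U5 + V5 = {#g, g#} + X1 + X2"
    and X1: "atom2 5 X1" "\<forall>h. count X1 h \<le> 1" and X2: "\<forall>h. count X2 h \<le> 1"
  shows False
proof -
  define w where "w = (\<lambda>h::nat set. card (h \<inter> {0, 1, 2, 3}))"
  have "(\<Sum>h\<in>#filter_mset (\<lambda>h. 4 \<notin> h) X1. w h) = (\<Sum>h\<in>#mset_set ({{0}, {1}, {2}, {3}} - {g}). 1)"
    unfolding U5_V5_square_split_avoiding_4[OF g B X1(2) X2]
    by (rule arg_cong[where f = sum_mset], rule image_mset_cong) (auto simp: w_def)
  also have "\<dots> = 3" using g by (auto simp: card_Diff_singleton)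
  finally have low: "(\<Sum>h\<in>#filter_mset (\<lambda>h. 4 \<notin> h) X1. w h) = 3" .
  have "even (\<Sum>h\<in>#filter_mset (\<lambda>h. 4 \<in> h) X1. w h)"
  proof (rule even_sum_mset, rule ballI)
    fix h assume h: "h \<in># filter_mset (\<lambda>h. 4 \<in> h) X1"
    have "X1 \<subseteq># U5 + V5" unfolding B by simp
    then have "h \<in># filter_mset (\<lambda>h. 4 \<in> h) (U5 + V5)"
      using h by (meson mset_subset_eqD multiset_filter_mono)
    then show "even (w h)" unfolding U5_V5_filter_4 w_def by auto
  qed
  moreover have "even (\<Sum>h\<in>#X1. w h)"
    unfolding w_def by (rule zero_sum_even_card_inter[OF atom2_seq_sum[OF X1(1)]]) simp
  moreover have "(\<Sum>h\<in>#X1. w h) = (\<Sum>h\<in>#filter_mset (\<lambda>h. 4 \<notin> h) X1. w h)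
      + (\<Sum>h\<in>#filter_mset (\<lambda>h. 4 \<in> h) X1. w h)"
    using sum_mset_filter_partition[of w X1 "\<lambda>h. 4 \<notin> h"] by simp
  ultimately show False using low by simp
qed

lemma three_notin_Lset_U5_V5: "3 \<notin> Lset 5 (U5 + V5)"
proof
  assume "3 \<in> Lset 5 (U5 + V5)"
  then obtain F where F: "size F = 3" "\<forall>A\<in>#F. atom2 5 A" "sum_mset F = U5 + V5"
    using mem_Lset_iff by blast
  then obtain g X1 X2 where FX: "F = {#{#g, g#}, X1, X2#}" "3 \<le> size X1" "3 \<le> size X2"
    using U5_V5_length_3_shape by blast
  have B: "U5 + V5 = {#g, g#} + X1 + X2" using F(3) FX(1) by (simp add: add.assoc)
  have X: "atom2 5 X1" "atom2 5 X2" using F(2) FX(1) by simp_all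
  have "2 \<le> count (U5 + V5) g" unfolding B by simp
  then show False
    using U5_V5_no_square_split[OF U5_V5_count_ge_2_singleton B X(1)] atom2_count_le_1[OF X(1) FX(2)]
      atom2_count_le_1[OF X(2) FX(3)] by blast
qed

lemma Lset_U5_V5: "Lset 5 (U5 + V5) = {2, 4, 5}"
proof
  show "Lset 5 (U5 + V5) \<subseteq> {2, 4, 5}"
  proof
    fix k assume k: "k \<in> Lset 5 (U5 + V5)"
    then have "2 \<le> k" "2 * k \<le> 12" using Lset_product_of_two_atoms[OF atom2_U5 atom2_V5] by auto
    moreover have "6 \<notin> Lset 5 (U5 + V5)"
      by (rule half_size_notin_Lset[where x = "{4}"]) (simp_all add: eq_iff_bits5_eq bits5_def)
    then have "k \<noteq> 6" using k by blast
    moreover have "k \<noteq> 3" using k three_notin_Lset_U5_V5 by blast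
    ultimately show "k \<in> {2, 4, 5}" by auto
  qed
  have "size {#U5, V5#} \<in> Lset 5 (U5 + V5)"
    by (rule size_in_Lset) (use atom2_U5 atom2_V5 in auto)
  moreover have "atom2 5 (mset [{2, 3, 4}, {2}, {3}, {4::nat}])"
    "atom2 5 (mset [{0, 1, 4}, {0, 1, 2, 3, 4}, {2}, {3::nat}])"
    by (rule triangular_atom2_bits5; simp add: bits5_def elem2_def seq_sum_def)+
  then have "size {#mset [{2, 3, 4}, {2}, {3}, {4::nat}], mset [{0, 1, 4}, {0, 1, 2, 3, 4}, {2}, {3}],
      {#{0}, {0}#}, {#{1}, {1}#}#} \<in> Lset 5 (U5 + V5)"
    by (intro size_in_Lset) (auto intro!: atom2_double simp: elem2_def add_mset_commute)
  moreover have "atom2 5 (mset [{0, 1, 2, 3, 4}, {0, 1, 4}, {2, 3, 4}, {4::nat}])"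
    by (rule triangular_atom2_bits5) (simp_all add: bits5_def elem2_def seq_sum_def)
  then have "size {#mset [{0, 1, 2, 3, 4}, {0, 1, 4}, {2, 3, 4}, {4::nat}], {#{0}, {0}#},
      {#{1}, {1}#}, {#{2}, {2}#}, {#{3}, {3}#}#} \<in> Lset 5 (U5 + V5)"
    by (intro size_in_Lset) (auto intro!: atom2_double simp: elem2_def add_mset_commute)
  ultimately show "{2, 4, 5} \<subseteq> Lset 5 (U5 + V5)" by (simp add: eval_nat_numeral)
qed

theorem lemma4p3:
  fixes r :: nat
  assumes "r \<ge> 3"
  shows "{2, r - 1, r} \<in> system_of_sets r \<longleftrightarrow> r \<in> {3..5}"
proof
  assume "{2, r - 1, r} \<in> system_of_sets r"
  then obtain B where "Lset r B = {2, r - 1, r}" unfolding system_of_sets_def by auto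
  then have "\<not> 6 \<le> r" using Lset_ne_2_rm1_r by blast
  then show "r \<in> {3..5}" using assms by simp
next
  assume "r \<in> {3..5}"
  then consider "r = 3" | "r = 4" | "r = 5" by force
  then show "{2, r - 1, r} \<in> system_of_sets r"
  proof cases
    case 1
    then show ?thesis
      using Lset_in_system_of_sets[OF zero_sum_seq_atom_product[OF atom2_U3 atom2_U3]] Lset_U3_U3
      by simp
  next
    case 2
    then show ?thesis
      using Lset_in_system_of_sets[OF zero_sum_seq_atom_product[OF atom2_U4 atom2_V4]] Lset_U4_V4
      by simp
  next
    case 3
    then show ?thesis
      using Lset_in_system_of_sets[OF zero_sum_seq_atom_product[OF atom2_U5 atom2_V5]] Lset_U5_V5
      by simp
  qed
qed

end
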